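(* There exists $C(d,\Lambda)<\infty$ such that, for every $m\in\mathbb N$ and $p\in\mathbb P_m^*$, there exists $q\in\mathbb P^*_{m+2}$ with $-\nabla\cdot\bar{\mathbf a}\nabla q=p$ in $\mathbb R^d$ and $$|\nabla^{m+2}q|\le C^m|\nabla^mp|.$$
   Context: $\bar{\mathbf a}\in\mathbb R^{d\times d}$ is a constant matrix (the homogenized matrix of a periodic coefficient field) satisfying $|\xi|^2\le\xi\cdot\bar{\mathbf a}\xi$ and $|\eta\cdot\bar{\mathbf a}\xi|\le\Lambda|\eta||\xi|$ for all $\xi,\eta\in\mathbb R^d$, with $\Lambda\ge1$. $\mathbb P_m^*$ is the space of real homogeneous polynomials of degree $m$ on $\mathbb R^d$. For $p\in\mathbb P_m^*$, $\nabla^mp=(\partial^\alpha p)_{|\alpha|=m}$ is a constant symmetric $m$-tensor, and for a symmetric $m$-tensor $T$, $|T|:=\big(\sum_{|\alpha|=m}\frac{m!}{\alpha!}T_\alpha^2\big)^{1/2}$. *)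

theory Defs
  imports "HOL-Analysis.Analysis"
begin

text \<open>Points of R^d are vectors of type real^'d (d = CARD('d)).
  Multi-indices are functions 'd => nat; |alpha| = sum alpha UNIV.\<close>

definition multi_indices :: "nat \<Rightarrow> ('d::finite \<Rightarrow> nat) set" where
  "multi_indices m = {\<alpha>. (\<Sum>i\<in>UNIV. \<alpha> i) = m}"

definition monomial :: "('d::finite \<Rightarrow> nat) \<Rightarrow> real^'d \<Rightarrow> real" where
  "monomial \<alpha> x = (\<Prod>i\<in>UNIV. (x $ i) ^ (\<alpha> i))"

definition hom_polys :: "nat \<Rightarrow> (real^'d::finite \<Rightarrow> real) set" where
  "hom_polys m = {p. \<exists>c. p = (\<lambda>x. \<Sum>\<alpha>\<in>multi_indices m. c \<alpha> * monomial \<alpha> x)}"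

definition partial :: "'d::finite \<Rightarrow> (real^'d \<Rightarrow> real) \<Rightarrow> real^'d \<Rightarrow> real" where
  "partial i f x = deriv (\<lambda>t. f (x + t *\<^sub>R axis i 1)) 0"

fun partial_list :: "'d::finite list \<Rightarrow> (real^'d \<Rightarrow> real) \<Rightarrow> real^'d \<Rightarrow> real" where
  "partial_list [] f = f"
| "partial_list (i # is) f = partial i (partial_list is f)"

definition partial_multi :: "('d::finite \<Rightarrow> nat) \<Rightarrow> (real^'d \<Rightarrow> real) \<Rightarrow> real^'d \<Rightarrow> real" where
  "partial_multi \<alpha> f = partial_list (SOME xs. \<forall>i. count_list xs i = \<alpha> i) f"

text \<open>The constant symmetric m-tensor nabla^m p = (partial^alpha p)_{|alpha|=m}
  (evaluated at the origin; it is constant for p in P_m^*).\<close>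
definition grad_tensor :: "nat \<Rightarrow> (real^'d::finite \<Rightarrow> real) \<Rightarrow> ('d \<Rightarrow> nat) \<Rightarrow> real" where
  "grad_tensor m p \<alpha> = partial_multi \<alpha> p 0"

definition tensor_norm :: "nat \<Rightarrow> (('d::finite \<Rightarrow> nat) \<Rightarrow> real) \<Rightarrow> real" where
  "tensor_norm m T = sqrt (\<Sum>\<alpha>\<in>multi_indices m.
      (fact m / (\<Prod>i\<in>UNIV. fact (\<alpha> i))) * (T \<alpha>)^2)"

definition neg_div_A_grad :: "real^'d^'d \<Rightarrow> (real^'d::finite \<Rightarrow> real) \<Rightarrow> real^'d \<Rightarrow> real" where
  "neg_div_A_grad A q x = - (\<Sum>i\<in>UNIV. partial i (\<lambda>y. \<Sum>j\<in>UNIV. A $ i $ j * partial j q y) x)"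

end

theory Submission
  imports Defs "HOL-Library.Function_Algebras"
begin

text \<open>Polynomials are handled through their coefficient families, with the Fischer inner
  product \<open>\<langle>c, e\<rangle>\<^sub>m = \<Sum> \<alpha>! c\<^sub>\<alpha> e\<^sub>\<alpha>\<close>: for it, multiplication by \<open>x\<^sub>i\<close> is adjoint to \<open>\<partial>\<^sub>i\<close>, and
  \<open>|\<nabla>\<^sup>m p|\<^sup>2 = m! \<langle>p, p\<rangle>\<^sub>m\<close>. Let \<open>S\<close> be the symmetric part of \<open>A\<close>, \<open>L = \<nabla>\<cdot>S\<nabla>\<close> (which agrees
  with \<open>\<nabla>\<cdot>A\<nabla>\<close> on polynomials) and \<open>M\<close> multiplication by \<open>x\<cdot>Sx\<close>, the adjoint of \<open>L\<close>.
  We look for \<open>q = M r\<close> with \<open>r \<in> P\<^sub>m\<close>. The commutator \<open>[L, M]\<close> is \<open>2|S|\<^sup>2\<close> plus a sum of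
  squares, so \<open>\<langle>r, L M r\<rangle> \<ge> 2|S|\<^sup>2 \<langle>r, r\<rangle>\<close>, and \<open>|S|\<^sup>2 \<ge> 1\<close> by ellipticity; hence \<open>L M\<close> is
  injective, thus bijective, on \<open>P\<^sub>m\<close>. If \<open>L M r = -p\<close>, then
  \<open>\<langle>q, q\<rangle> = \<langle>r, L q\<rangle> = -\<langle>r, p\<rangle> \<le> \<langle>r, r\<rangle> + \<langle>p, p\<rangle>/4 \<le> \<langle>q, q\<rangle>/2 + \<langle>p, p\<rangle>/4\<close>, so
  \<open>\<langle>q, q\<rangle> \<le> \<langle>p, p\<rangle>/2\<close>, and \<open>(m+2)!/2 \<le> 9\<^sup>m m!\<close> gives the claim with \<open>C = 3\<close>, independently
  of \<open>d\<close> and \<open>\<Lambda>\<close>.\<close>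

lemma (in vector_space) linear_inj_on_imp_surj_on:
  assumes lin: "Vector_Spaces.linear scale scale f" and V: "subspace V"
    and E: "finite E" "V \<subseteq> span E"
    and maps: "f ` V \<subseteq> V" and inj: "inj_on f V"
  shows "f ` V = V"
proof -
  interpret f: Vector_Spaces.linear scale scale f by (rule lin)
  obtain B where B: "B \<subseteq> V" "independent B" "V \<subseteq> span B"
    by (meson basis_exists)
  have finB: "finite B"
    using independent_span_bound[OF E(1) B(2)] B(1) E(2) by auto
  have spanB: "span B = V"
    using B(1,3) span_minimal[OF B(1) V] by auto
  have indep: "independent (f ` B)"
    using f.independent_injective_image[OF B(2)] inj spanB by simp
  have card: "card (f ` B) = card B"
    using card_image inj_on_subset[OF inj B(1)] by blast
  have "V \<subseteq> span (f ` B)"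
  proof
    fix v assume "v \<in> V"
    show "v \<in> span (f ` B)"
    proof (rule ccontr)
      assume v: "v \<notin> span (f ` B)"
      have "independent (insert v (f ` B))"
        using independent_insertI[OF v indep] .
      moreover have "insert v (f ` B) \<subseteq> span B"
        using \<open>v \<in> V\<close> maps B(1) spanB by auto
      ultimately have "card (insert v (f ` B)) \<le> card B"
        using independent_span_bound finB by blast
      moreover have "v \<notin> f ` B"
        using v span_base by blast
      ultimately show False
        using finB card by simp
    qed
  qed
  then show ?thesis
    using maps f.span_image spanB by auto
qed

lemma sum_fun_apply: "finite J \<Longrightarrow> sum f J k = (\<Sum>j\<in>J. f j k)"
  for f :: "'b \<Rightarrow> 'a \<Rightarrow> real"
  by (induction J rule: finite_induct) (auto simp: plus_fun_def)

lemma solvable_on_finite_support: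
  fixes T :: "('a \<Rightarrow> real) \<Rightarrow> 'a \<Rightarrow> real" and J :: "'a set"
  assumes fin: "finite J"
    and lin: "\<And>x y a b. T (\<lambda>k. a * x k + b * y k) = (\<lambda>k. a * T x k + b * T y k)"
    and inj: "\<And>x. \<forall>k\<in>J. T x k = 0 \<Longrightarrow> \<forall>k\<in>J. x k = 0"
  shows "\<exists>x. \<forall>k\<in>J. T x k = p k"
proof -
  define s where "s = (\<lambda>(r::real) (f::'a \<Rightarrow> real) x. r * f x)"
  interpret fv: vector_space s
    unfolding s_def by unfold_locales (auto simp: fun_eq_iff algebra_simps)
  define T' where "T' = (\<lambda>x k. if k \<in> J then T x k else 0)"
  define V where "V = {x::'a \<Rightarrow> real. \<forall>k. k \<notin> J \<longrightarrow> x k = 0}"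
  define E where "E = (\<lambda>j k. if k = j then (1::real) else 0) ` J"
  interpret T': Vector_Spaces.linear s s T'
    using lin[of 1 _ 1] lin[of _ _ 0]
    by unfold_locales (auto simp: T'_def fun_eq_iff s_def plus_fun_def)
  have subV: "fv.subspace V"
    unfolding fv.subspace_def V_def by (auto simp: s_def)
  have VE: "V \<subseteq> fv.span E"
  proof
    fix x assume "x \<in> V"
    then have "x = (\<Sum>j\<in>J. s (x j) (\<lambda>k. if k = j then 1 else 0))"
      using fin by (auto simp: fun_eq_iff s_def V_def sum_fun_apply if_distrib cong: if_cong)
    also have "\<dots> \<in> fv.span E"
      by (intro fv.span_sum fv.span_scale fv.span_base) (auto simp: E_def)
    finally show "x \<in> fv.span E" .
  qed
  have "inj_on T' V"
  proof (subst T'.inj_on_iff_eq_0[OF subV], intro ballI impI)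
    fix x assume x: "x \<in> V" "T' x = 0"
    then have "\<forall>k\<in>J. T x k = 0"
      by (auto simp: T'_def fun_eq_iff) metis
    with inj x(1) show "x = 0"
      by (auto simp: V_def fun_eq_iff)
  qed
  moreover have "T' ` V \<subseteq> V"
    by (auto simp: T'_def V_def)
  moreover have "finite E"
    using fin by (simp add: E_def)
  ultimately have "T' ` V = V"
    using fv.linear_inj_on_imp_surj_on[OF T'.linear_axioms subV _ VE] by blast
  moreover have "(\<lambda>k. if k \<in> J then p k else 0) \<in> V"
    by (auto simp: V_def)
  ultimately obtain x where "(\<lambda>k. if k \<in> J then p k else 0) = T' x"
    by (metis imageE)
  then show ?thesis
    by (auto simp: T'_def fun_eq_iff) metis
qed

lemma finite_multi_indices: "finite (multi_indices m :: ('d::finite \<Rightarrow> nat) set)"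
proof (rule finite_subset)
  show "multi_indices m \<subseteq> Pi\<^sub>E (UNIV::'d set) (\<lambda>_. {..m})"
  proof
    fix \<alpha> :: "'d \<Rightarrow> nat" assume "\<alpha> \<in> multi_indices m"
    then have "\<alpha> k \<le> m" for k
      unfolding multi_indices_def using member_le_sum[of k UNIV \<alpha>] by auto
    then show "\<alpha> \<in> Pi\<^sub>E UNIV (\<lambda>_. {..m})"
      by (auto simp: PiE_UNIV_domain)
  qed
qed (intro finite_PiE; simp)

lemma multi_indices_0: "multi_indices 0 = {(\<lambda>_. 0) :: 'd::finite \<Rightarrow> nat}"
  unfolding multi_indices_def by (auto simp: fun_eq_iff)

definition mi_inc :: "'d \<Rightarrow> ('d \<Rightarrow> nat) \<Rightarrow> ('d \<Rightarrow> nat)" where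
  "mi_inc i \<alpha> = \<alpha>(i := Suc (\<alpha> i))"

definition mi_dec :: "'d \<Rightarrow> ('d \<Rightarrow> nat) \<Rightarrow> ('d \<Rightarrow> nat)" where
  "mi_dec i \<alpha> = \<alpha>(i := \<alpha> i - 1)"

definition mi_fact :: "('d::finite \<Rightarrow> nat) \<Rightarrow> real" where
  "mi_fact \<alpha> = (\<Prod>k\<in>UNIV. fact (\<alpha> k))"

lemma mi_dec_inc [simp]: "mi_dec i (mi_inc i \<gamma>) = \<gamma>"
  by (auto simp: mi_dec_def mi_inc_def)

lemma mi_inc_dec [simp]: "\<alpha> i > 0 \<Longrightarrow> mi_inc i (mi_dec i \<alpha>) = \<alpha>"
  by (auto simp: mi_dec_def mi_inc_def fun_eq_iff)

lemma mi_inc_apply [simp]: "mi_inc i \<gamma> j = (if j = i then Suc (\<gamma> i) else \<gamma> j)"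
  by (simp add: mi_inc_def)

lemma mi_dec_apply [simp]: "mi_dec i \<gamma> j = (if j = i then \<gamma> i - 1 else \<gamma> j)"
  by (simp add: mi_dec_def)

lemma mi_inc_commute: "mi_inc a (mi_inc b \<alpha>) = mi_inc b (mi_inc a \<alpha>)"
  by (auto simp: fun_eq_iff)

lemma sum_fun_upd_add: "sum (\<gamma>(i := v)) (UNIV::'d::finite set) + \<gamma> i = sum \<gamma> UNIV + (v::nat)"
proof -
  have "sum (\<gamma>(i := v)) UNIV = v + sum \<gamma> (UNIV - {i})"
    by (subst sum.remove[of _ i]) (auto intro!: sum.cong)
  moreover have "sum \<gamma> UNIV = \<gamma> i + sum \<gamma> (UNIV - {i})"
    by (subst sum.remove[of _ i]) auto
  ultimately show ?thesis by presburger
qed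

lemma mi_inc_mem: "\<gamma> \<in> multi_indices m \<Longrightarrow> mi_inc i \<gamma> \<in> multi_indices (Suc m)"
  unfolding multi_indices_def mi_inc_def using sum_fun_upd_add[of \<gamma> i "Suc (\<gamma> i)"] by auto

lemma mi_dec_mem: "\<alpha> \<in> multi_indices (Suc m) \<Longrightarrow> \<alpha> i > 0 \<Longrightarrow> mi_dec i \<alpha> \<in> multi_indices m"
  unfolding multi_indices_def mi_dec_def using sum_fun_upd_add[of \<alpha> i "\<alpha> i - 1"] by auto

lemma mi_fact_pos: "mi_fact \<alpha> > 0"
  unfolding mi_fact_def by (intro prod_pos) auto

lemma mi_fact_inc: "mi_fact (mi_inc i \<gamma>) = real (Suc (\<gamma> i)) * mi_fact \<gamma>"
proof -
  have "(\<Prod>k\<in>UNIV-{i}. fact (mi_inc i \<gamma> k)) = (\<Prod>k\<in>UNIV-{i}. fact (\<gamma> k) :: real)"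
    by (intro prod.cong) auto
  then show ?thesis
    unfolding mi_fact_def by (simp add: prod.remove[of UNIV i])
qed

lemma sum_multi_indices_Suc:
  fixes f :: "('d::finite \<Rightarrow> nat) \<Rightarrow> real"
  assumes "\<And>\<alpha>. \<alpha> \<in> multi_indices (Suc m) \<Longrightarrow> \<alpha> i = 0 \<Longrightarrow> f \<alpha> = 0"
  shows "(\<Sum>\<alpha>\<in>multi_indices (Suc m). f \<alpha>) = (\<Sum>\<gamma>\<in>multi_indices m. f (mi_inc i \<gamma>))"
proof -
  have "(\<Sum>\<alpha>\<in>multi_indices (Suc m). f \<alpha>) = (\<Sum>\<alpha>\<in>mi_inc i ` multi_indices m. f \<alpha>)"
  proof (rule sum.mono_neutral_right)
    show "mi_inc i ` multi_indices m \<subseteq> multi_indices (Suc m)"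
      using mi_inc_mem by blast
    show "\<forall>\<alpha>\<in>multi_indices (Suc m) - mi_inc i ` multi_indices m. f \<alpha> = 0"
      using assms mi_dec_mem mi_inc_dec by (metis DiffE gr0I imageI)
  qed (rule finite_multi_indices)
  also have "\<dots> = (\<Sum>\<gamma>\<in>multi_indices m. f (mi_inc i \<gamma>))"
    by (rule sum.reindex_cong[OF _ refl refl]) (metis inj_on_inverseI mi_dec_inc)
  finally show ?thesis .
qed

text \<open>On coefficient families, \<open>cderiv i\<close> and \<open>xmult i\<close> act as \<open>\<partial>\<^sub>i\<close> and as multiplication by
  \<open>x\<^sub>i\<close>.\<close>

definition cderiv :: "'d \<Rightarrow> (('d \<Rightarrow> nat) \<Rightarrow> real) \<Rightarrow> ('d \<Rightarrow> nat) \<Rightarrow> real" where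
  "cderiv i c = (\<lambda>\<alpha>. real (Suc (\<alpha> i)) * c (mi_inc i \<alpha>))"

definition xmult :: "'d \<Rightarrow> (('d \<Rightarrow> nat) \<Rightarrow> real) \<Rightarrow> ('d \<Rightarrow> nat) \<Rightarrow> real" where
  "xmult i c = (\<lambda>\<alpha>. if \<alpha> i = 0 then 0 else c (mi_dec i \<alpha>))"

definition fischer :: "nat \<Rightarrow> (('d::finite \<Rightarrow> nat) \<Rightarrow> real) \<Rightarrow> (('d \<Rightarrow> nat) \<Rightarrow> real) \<Rightarrow> real" where
  "fischer m c e = (\<Sum>\<alpha>\<in>multi_indices m. mi_fact \<alpha> * c \<alpha> * e \<alpha>)"

lemma cderiv_sum: "cderiv i (\<lambda>\<alpha>. \<Sum>k\<in>K. f k \<alpha>) = (\<lambda>\<alpha>. \<Sum>k\<in>K. cderiv i (f k) \<alpha>)"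
  by (simp add: cderiv_def sum_distrib_left)

lemma cderiv_cmult: "cderiv i (\<lambda>\<alpha>. a * f \<alpha>) = (\<lambda>\<alpha>. a * cderiv i f \<alpha>)"
  by (simp add: cderiv_def fun_eq_iff)

lemma cderiv_add: "cderiv i (\<lambda>\<alpha>. f \<alpha> + g \<alpha>) = (\<lambda>\<alpha>. cderiv i f \<alpha> + cderiv i g \<alpha>)"
  by (simp add: cderiv_def fun_eq_iff algebra_simps)

lemma xmult_sum: "xmult i (\<lambda>\<alpha>. \<Sum>k\<in>K. f k \<alpha>) = (\<lambda>\<alpha>. \<Sum>k\<in>K. xmult i (f k) \<alpha>)"
  by (simp add: xmult_def fun_eq_iff)

lemma xmult_cmult: "xmult i (\<lambda>\<alpha>. a * f \<alpha>) = (\<lambda>\<alpha>. a * xmult i f \<alpha>)"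
  by (simp add: xmult_def fun_eq_iff)

lemma xmult_add: "xmult i (\<lambda>\<alpha>. f \<alpha> + g \<alpha>) = (\<lambda>\<alpha>. xmult i f \<alpha> + xmult i g \<alpha>)"
  by (simp add: xmult_def fun_eq_iff)

lemma cderiv_commute: "cderiv a (cderiv b c) = cderiv b (cderiv a c)"
  by (cases "a = b") (auto simp: cderiv_def mi_inc_commute[of a b])

lemma cderiv_xmult: "cderiv i (xmult j c) = (\<lambda>\<alpha>. xmult j (cderiv i c) \<alpha> + (if i = j then c \<alpha> else 0))"
proof (rule ext)
  fix \<alpha>
  show "cderiv i (xmult j c) \<alpha> = xmult j (cderiv i c) \<alpha> + (if i = j then c \<alpha> else 0)"
  proof (cases "i = j")
    case True
    then show ?thesis by (cases "\<alpha> j") (auto simp: cderiv_def xmult_def algebra_simps)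
  next
    case False
    then have "mi_dec j (mi_inc i \<alpha>) = mi_inc i (mi_dec j \<alpha>)"
      by (auto simp: fun_eq_iff)
    with False show ?thesis by (auto simp: cderiv_def xmult_def)
  qed
qed

lemma fischer_xmult_Suc: "fischer (Suc n) r (xmult i v) = fischer n (cderiv i r) v"
  unfolding fischer_def
  by (subst sum_multi_indices_Suc[where i=i]) (auto simp: xmult_def cderiv_def mi_fact_inc intro!: sum.cong)

lemma fischer_xmult_0: "fischer 0 r (xmult i v) = 0"
  unfolding fischer_def multi_indices_0 by (simp add: xmult_def)

lemma fischer_commute: "fischer m c e = fischer m e c"
  unfolding fischer_def by (auto intro!: sum.cong)

lemma fischer_self_nonneg: "fischer m c c \<ge> 0"
  unfolding fischer_def by (intro sum_nonneg) (simp add: mult.assoc mi_fact_pos less_imp_le)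

lemma fischer_self_eq_0:
  assumes "fischer m c c = 0" and "\<alpha> \<in> multi_indices m"
  shows "c \<alpha> = 0"
proof -
  have "\<forall>\<beta>\<in>multi_indices m. mi_fact \<beta> * c \<beta> * c \<beta> = 0"
    using assms(1) unfolding fischer_def
    by (subst sum_nonneg_eq_0_iff[symmetric]) (auto simp: finite_multi_indices mult.assoc mi_fact_pos less_imp_le)
  then show ?thesis
    using assms(2) mi_fact_pos[of \<alpha>] by auto
qed

lemma fischer_sum_right: "fischer m r (\<lambda>\<alpha>. \<Sum>k\<in>K. f k \<alpha>) = (\<Sum>k\<in>K. fischer m r (f k))"
  unfolding fischer_def by (simp add: sum_distrib_left) (rule sum.swap)

lemma fischer_cmult_right: "fischer m r (\<lambda>\<alpha>. a * f \<alpha>) = a * fischer m r f"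
  unfolding fischer_def by (simp add: sum_distrib_left algebra_simps)

lemma fischer_add_right: "fischer m r (\<lambda>\<alpha>. f \<alpha> + g \<alpha>) = fischer m r f + fischer m r g"
  unfolding fischer_def by (simp add: sum.distrib algebra_simps)

lemma fischer_sum_left: "fischer m (\<lambda>\<alpha>. \<Sum>k\<in>K. f k \<alpha>) r = (\<Sum>k\<in>K. fischer m (f k) r)"
  by (subst fischer_commute, simp add: fischer_sum_right fischer_commute)

lemma fischer_cmult_left: "fischer m (\<lambda>\<alpha>. a * f \<alpha>) r = a * fischer m f r"
  by (subst fischer_commute, simp add: fischer_cmult_right fischer_commute)

lemma fischer_square_bound: "- fischer m r c \<le> fischer m r r + fischer m c c / 4"
proof -
  have "fischer m r r + fischer m c c / 4 + fischer m r c
      = (\<Sum>\<alpha>\<in>multi_indices m. mi_fact \<alpha> * (r \<alpha> + c \<alpha> / 2)\<^sup>2)"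
    unfolding fischer_def sum_divide_distrib sum.distrib[symmetric]
    by (intro sum.cong refl) (simp add: power2_eq_square field_simps)
  also have "\<dots> \<ge> 0"
    by (intro sum_nonneg) (simp add: mi_fact_pos less_imp_le)
  finally show ?thesis by linarith
qed

definition sym_part :: "real^'d^'d \<Rightarrow> 'd \<Rightarrow> 'd \<Rightarrow> real" where
  "sym_part A i j = (A$i$j + A$j$i) / 2"

definition sym_norm2 :: "real^'d::finite^'d \<Rightarrow> real" where
  "sym_norm2 A = (\<Sum>a\<in>UNIV. \<Sum>b\<in>UNIV. sym_part A a b * sym_part A a b)"

text \<open>With \<open>S = sym_part A\<close>, the operators \<open>qderiv A\<close>, \<open>qmult A\<close>, \<open>lmult A b\<close> and \<open>lderiv A a\<close>
  act as \<open>\<nabla>\<cdot>S\<nabla>\<close>, multiplication by \<open>x\<cdot>Sx\<close>, multiplication by \<open>(Sx)\<^sub>b\<close>, and \<open>(S\<nabla>)\<^sub>a\<close>.\<close>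

definition qderiv :: "real^'d::finite^'d \<Rightarrow> (('d \<Rightarrow> nat) \<Rightarrow> real) \<Rightarrow> ('d \<Rightarrow> nat) \<Rightarrow> real" where
  "qderiv A c = (\<lambda>\<alpha>. \<Sum>a\<in>UNIV. \<Sum>b\<in>UNIV. sym_part A a b * cderiv a (cderiv b c) \<alpha>)"

definition qmult :: "real^'d::finite^'d \<Rightarrow> (('d \<Rightarrow> nat) \<Rightarrow> real) \<Rightarrow> ('d \<Rightarrow> nat) \<Rightarrow> real" where
  "qmult A r = (\<lambda>\<alpha>. \<Sum>c\<in>UNIV. \<Sum>d\<in>UNIV. sym_part A c d * xmult c (xmult d r) \<alpha>)"

definition lmult :: "real^'d::finite^'d \<Rightarrow> 'd \<Rightarrow> (('d \<Rightarrow> nat) \<Rightarrow> real) \<Rightarrow> ('d \<Rightarrow> nat) \<Rightarrow> real" where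
  "lmult A b r = (\<lambda>\<alpha>. \<Sum>c\<in>UNIV. sym_part A b c * xmult c r \<alpha>)"

definition lderiv :: "real^'d::finite^'d \<Rightarrow> 'd \<Rightarrow> (('d \<Rightarrow> nat) \<Rightarrow> real) \<Rightarrow> ('d \<Rightarrow> nat) \<Rightarrow> real" where
  "lderiv A a r = (\<lambda>\<alpha>. \<Sum>c\<in>UNIV. sym_part A a c * cderiv c r \<alpha>)"

lemma sym_part_commute: "sym_part A i j = sym_part A j i"
  by (simp add: sym_part_def)

lemma qderiv_swap: "(\<lambda>\<alpha>. \<Sum>c\<in>UNIV. \<Sum>d\<in>UNIV. sym_part A c d * cderiv d (cderiv c r) \<alpha>) = qderiv A r"
  unfolding qderiv_def by (rule ext, subst sum.swap) (simp add: sym_part_commute)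

lemma qmult_sum: "qmult A (\<lambda>\<beta>. \<Sum>k\<in>K. h k \<beta>) \<alpha> = (\<Sum>k\<in>K. qmult A (h k) \<alpha>)"
proof -
  have "qmult A (\<lambda>\<beta>. \<Sum>k\<in>K. h k \<beta>) \<alpha>
      = (\<Sum>c\<in>UNIV. \<Sum>k\<in>K. \<Sum>d\<in>UNIV. sym_part A c d * xmult c (xmult d (h k)) \<alpha>)"
    unfolding qmult_def xmult_sum sum_distrib_left by (intro sum.cong refl sum.swap)
  then show ?thesis
    unfolding qmult_def by (simp add: sum.swap[of _ UNIV K])
qed

lemma qmult_cmult: "qmult A (\<lambda>\<beta>. a * h \<beta>) \<alpha> = a * qmult A h \<alpha>"
  unfolding qmult_def xmult_cmult by (simp add: sum_distrib_left algebra_simps)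

lemma qmult_linear: "qmult A (\<lambda>\<beta>. a * x \<beta> + b * y \<beta>) = (\<lambda>\<alpha>. a * qmult A x \<alpha> + b * qmult A y \<alpha>)"
  unfolding qmult_def
  by (simp add: xmult_add xmult_cmult distrib_left sum.distrib sum_distrib_left mult.left_commute)

lemma qderiv_linear: "qderiv A (\<lambda>\<beta>. a * x \<beta> + b * y \<beta>) = (\<lambda>\<alpha>. a * qderiv A x \<alpha> + b * qderiv A y \<alpha>)"
  unfolding qderiv_def
  by (simp add: cderiv_add cderiv_cmult distrib_left sum.distrib sum_distrib_left mult.left_commute)

lemma cderiv_qmult: "cderiv b (qmult A r) = (\<lambda>\<alpha>. qmult A (cderiv b r) \<alpha> + 2 * lmult A b r \<alpha>)"
proof (rule ext)
  fix \<alpha>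
  have xx: "cderiv b (xmult c (xmult d r)) \<alpha> = xmult c (xmult d (cderiv b r)) \<alpha>
      + (if b = d then xmult c r \<alpha> else 0) + (if b = c then xmult d r \<alpha> else 0)" for c d
    by (cases "b = d") (auto simp: cderiv_xmult xmult_add)
  have first: "(\<Sum>c\<in>UNIV. \<Sum>d\<in>UNIV. sym_part A c d * (if b = d then xmult c r \<alpha> else 0)) = lmult A b r \<alpha>"
    by (simp add: lmult_def if_distrib[of "(*) _"] sym_part_commute cong: if_cong)
  have second: "(\<Sum>c\<in>UNIV. \<Sum>d\<in>UNIV. sym_part A c d * (if b = c then xmult d r \<alpha> else 0)) = lmult A b r \<alpha>"
    by (subst sum.swap) (simp add: lmult_def if_distrib[of "(*) _"] cong: if_cong)
  have "cderiv b (qmult A r) \<alpha> = (\<Sum>c\<in>UNIV. \<Sum>d\<in>UNIV. sym_part A c d * cderiv b (xmult c (xmult d r)) \<alpha>)"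
    by (simp add: qmult_def cderiv_sum cderiv_cmult)
  also have "\<dots> = qmult A (cderiv b r) \<alpha>
      + (\<Sum>c\<in>UNIV. \<Sum>d\<in>UNIV. sym_part A c d * (if b = d then xmult c r \<alpha> else 0))
      + (\<Sum>c\<in>UNIV. \<Sum>d\<in>UNIV. sym_part A c d * (if b = c then xmult d r \<alpha> else 0))"
    unfolding xx qmult_def by (simp only: distrib_left sum.distrib)
  finally show "cderiv b (qmult A r) \<alpha> = qmult A (cderiv b r) \<alpha> + 2 * lmult A b r \<alpha>"
    unfolding first second by simp
qed

lemma cderiv_lmult: "cderiv a (lmult A b r) = (\<lambda>\<alpha>. lmult A b (cderiv a r) \<alpha> + sym_part A b a * r \<alpha>)"
  by (rule ext) (simp add: lmult_def cderiv_sum cderiv_cmult cderiv_xmult distrib_left sum.distrib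
      if_distrib[of "(*) _"] sum.If_cases)

lemma qderiv_qmult: "qderiv A (qmult A r) = (\<lambda>\<alpha>. qmult A (qderiv A r) \<alpha>
   + 2 * (\<Sum>a\<in>UNIV. \<Sum>b\<in>UNIV. sym_part A a b * (lmult A a (cderiv b r) \<alpha> + lmult A b (cderiv a r) \<alpha>))
   + 2 * sym_norm2 A * r \<alpha>)"
proof (rule ext)
  fix \<alpha>
  have dd: "cderiv a (cderiv b (qmult A r)) \<alpha> = qmult A (cderiv a (cderiv b r)) \<alpha>
      + 2 * lmult A a (cderiv b r) \<alpha> + 2 * lmult A b (cderiv a r) \<alpha> + 2 * sym_part A a b * r \<alpha>" for a b
    by (simp add: cderiv_qmult cderiv_lmult cderiv_add cderiv_cmult algebra_simps sym_part_commute)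
  have "qmult A (qderiv A r) \<alpha>
      = (\<Sum>a\<in>UNIV. \<Sum>b\<in>UNIV. sym_part A a b * qmult A (cderiv a (cderiv b r)) \<alpha>)"
    unfolding qderiv_def by (simp add: qmult_sum qmult_cmult)
  then show "qderiv A (qmult A r) \<alpha> = qmult A (qderiv A r) \<alpha>
      + 2 * (\<Sum>a\<in>UNIV. \<Sum>b\<in>UNIV. sym_part A a b * (lmult A a (cderiv b r) \<alpha> + lmult A b (cderiv a r) \<alpha>))
      + 2 * sym_norm2 A * r \<alpha>"
    unfolding qderiv_def dd sym_norm2_def
    by (simp add: sum.distrib sum_distrib_left sum_distrib_right algebra_simps)
qed

lemma fischer_qmult:
  "fischer m r (qmult A w) = (case m of Suc (Suc n) \<Rightarrow> fischer n (qderiv A r) w | _ \<Rightarrow> 0)"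
proof -
  have expand: "fischer m r (qmult A w) = (\<Sum>c\<in>UNIV. \<Sum>d\<in>UNIV. sym_part A c d * fischer m r (xmult c (xmult d w)))"
    unfolding qmult_def by (simp add: fischer_sum_right fischer_cmult_right)
  show ?thesis
  proof (cases m)
    case (Suc k)
    with expand show ?thesis
      by (cases k) (simp_all add: fischer_xmult_0 fischer_xmult_Suc fischer_sum_left fischer_cmult_left
          flip: qderiv_swap)
  qed (use expand in \<open>simp add: fischer_xmult_0\<close>)
qed

lemma fischer_lmult: "fischer (Suc n) r (lmult A a v) = fischer n (lderiv A a r) v"
  by (simp add: lmult_def lderiv_def fischer_sum_right fischer_cmult_right fischer_xmult_Suc
      fischer_sum_left fischer_cmult_left)

lemma fischer_commutator_middle_nonneg:
  "(\<Sum>a\<in>UNIV. \<Sum>b\<in>UNIV. sym_part A a b *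
      (fischer m r (lmult A a (cderiv b r)) + fischer m r (lmult A b (cderiv a r)))) \<ge> 0"
proof (cases m)
  case 0
  then show ?thesis
    by (simp add: lmult_def fischer_sum_right fischer_cmult_right fischer_xmult_0)
next
  case (Suc n)
  have "(\<Sum>a\<in>UNIV. \<Sum>b\<in>UNIV. sym_part A a b * fischer n (lderiv A a r) (cderiv b r))
      = (\<Sum>a\<in>UNIV. fischer n (lderiv A a r) (lderiv A a r))"
    by (simp add: lderiv_def fischer_sum_right fischer_cmult_right)
  moreover have "(\<Sum>a\<in>UNIV. \<Sum>b\<in>UNIV. sym_part A a b * fischer n (lderiv A b r) (cderiv a r))
      = (\<Sum>b\<in>UNIV. fischer n (lderiv A b r) (lderiv A b r))"
    by (subst sum.swap) (simp add: lderiv_def fischer_sum_right fischer_cmult_right sym_part_commute)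
  moreover have "(\<Sum>a\<in>UNIV. fischer n (lderiv A a r) (lderiv A a r)) \<ge> 0"
    by (intro sum_nonneg fischer_self_nonneg)
  ultimately show ?thesis
    using Suc by (simp add: fischer_lmult distrib_left sum.distrib)
qed

lemma fischer_qderiv_qmult_ge: "fischer m r (qderiv A (qmult A r)) \<ge> 2 * sym_norm2 A * fischer m r r"
proof -
  have "fischer m r (qmult A (qderiv A r)) \<ge> 0"
    by (simp add: fischer_qmult fischer_self_nonneg split: nat.split)
  then show ?thesis
    using fischer_commutator_middle_nonneg[of A m r]
    by (simp add: qderiv_qmult fischer_add_right fischer_cmult_right fischer_sum_right mult.assoc)
qed

lemma qderiv_qmult_solvable:
  assumes "sym_norm2 A > 0"
  shows "\<exists>r. \<forall>\<alpha>\<in>multi_indices m. qderiv A (qmult A r) \<alpha> = c \<alpha>"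
proof (rule solvable_on_finite_support[OF finite_multi_indices])
  show "qderiv A (qmult A (\<lambda>k. a * x k + b * y k)) = (\<lambda>k. a * qderiv A (qmult A x) k + b * qderiv A (qmult A y) k)"
    for a b x y
    by (simp add: qmult_linear qderiv_linear)
  show "\<forall>\<alpha>\<in>multi_indices m. x \<alpha> = 0" if "\<forall>\<alpha>\<in>multi_indices m. qderiv A (qmult A x) \<alpha> = 0" for x
  proof -
    have "fischer m x (qderiv A (qmult A x)) = 0"
      using that unfolding fischer_def by simp
    then have "2 * sym_norm2 A * fischer m x x \<le> 0"
      using fischer_qderiv_qmult_ge[of A m x] by simp
    then have "fischer m x x = 0"
      using assms fischer_self_nonneg[of m x] by (simp add: mult_le_0_iff)
    then show ?thesis
      using fischer_self_eq_0 by blast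
  qed
qed

lemma fischer_qmult_solution_le:
  assumes K: "sym_norm2 A \<ge> 1"
    and sol: "\<forall>\<alpha>\<in>multi_indices m. qderiv A (qmult A r) \<alpha> = - c \<alpha>"
  shows "fischer (Suc (Suc m)) (qmult A r) (qmult A r) \<le> fischer m c c / 2"
proof -
  have adj: "fischer (Suc (Suc m)) (qmult A r) (qmult A r) = fischer m r (qderiv A (qmult A r))"
    by (simp add: fischer_qmult fischer_commute)
  have "fischer m r (qderiv A (qmult A r)) = - fischer m r c"
    using sol unfolding fischer_def by (simp add: sum_negf)
  moreover have "2 * fischer m r r \<le> 2 * sym_norm2 A * fischer m r r"
    using K fischer_self_nonneg[of m r] by (simp add: mult_right_mono)
  ultimately show ?thesis
    using adj fischer_qderiv_qmult_ge[of A m r] fischer_square_bound[of m r c] by linarith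
qed

lemma sym_norm2_ge_1:
  fixes A :: "real^'d::finite^'d"
  assumes ell: "\<forall>\<xi>. (norm \<xi>)\<^sup>2 \<le> \<xi> \<bullet> (A *v \<xi>)"
  shows "sym_norm2 A \<ge> 1"
proof -
  fix i :: 'd
  have "axis i 1 \<bullet> (A *v axis i (1::real)) = A $ i $ i"
    unfolding inner_axis' by (simp add: matrix_vector_mult_def axis_def if_distrib cong: if_cong)
  then have "1 \<le> sym_part A i i"
    using ell[rule_format, of "axis i 1"] by (simp add: sym_part_def)
  then have "1 \<le> sym_part A i i * sym_part A i i"
    by (metis mult_mono' mult_1 zero_le_one)
  also have "\<dots> \<le> (\<Sum>b\<in>UNIV. sym_part A i b * sym_part A i b)"
    by (rule member_le_sum) auto
  also have "\<dots> \<le> sym_norm2 A"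
    unfolding sym_norm2_def by (rule member_le_sum) (auto intro: sum_nonneg)
  finally show ?thesis .
qed

definition poly_of_coeffs :: "nat \<Rightarrow> (('d::finite \<Rightarrow> nat) \<Rightarrow> real) \<Rightarrow> real^'d \<Rightarrow> real" where
  "poly_of_coeffs m c = (\<lambda>x. \<Sum>\<alpha>\<in>multi_indices m. c \<alpha> * monomial \<alpha> x)"

lemma hom_polys_eq_range: "hom_polys m = range (poly_of_coeffs m)"
  unfolding hom_polys_def poly_of_coeffs_def by auto

lemma poly_of_coeffs_sum: "poly_of_coeffs n (\<lambda>\<alpha>. \<Sum>k\<in>K. f k \<alpha>) x = (\<Sum>k\<in>K. poly_of_coeffs n (f k) x)"
  unfolding poly_of_coeffs_def by (simp add: sum_distrib_right) (rule sum.swap)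

lemma poly_of_coeffs_cmult: "poly_of_coeffs n (\<lambda>\<alpha>. a * f \<alpha>) x = a * poly_of_coeffs n f x"
  unfolding poly_of_coeffs_def by (simp add: sum_distrib_left algebra_simps)

lemma poly_of_coeffs_uminus: "poly_of_coeffs n (\<lambda>\<alpha>. - f \<alpha>) x = - poly_of_coeffs n f x"
  unfolding poly_of_coeffs_def by (simp add: sum_negf)

lemma poly_of_coeffs_0: "poly_of_coeffs 0 c x = c (\<lambda>_. 0)"
  unfolding poly_of_coeffs_def multi_indices_0 by (simp add: monomial_def)

lemma has_real_derivative_monomial:
  "((\<lambda>t. monomial \<alpha> (x + t *\<^sub>R axis i 1)) has_real_derivative (real (\<alpha> i) * monomial (mi_dec i \<alpha>) x)) (at 0)"
proof -
  define R where "R = (\<Prod>k\<in>UNIV-{i}. (x$k) ^ \<alpha> k)"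
  have split: "monomial \<beta> y = y$i ^ \<beta> i * (\<Prod>k\<in>UNIV-{i}. (y$k) ^ \<beta> k)" for \<beta> y
    unfolding monomial_def by (subst prod.remove[of _ i]) auto
  have "monomial \<alpha> (x + t *\<^sub>R axis i 1) = (x$i + t) ^ \<alpha> i * R" for t
    unfolding split R_def by (auto simp: axis_def intro!: prod.cong)
  moreover have "monomial (mi_dec i \<alpha>) x = x$i ^ (\<alpha> i - 1) * R"
    unfolding split R_def by (auto intro!: prod.cong)
  moreover have "((\<lambda>t. (x$i + t) ^ \<alpha> i * R) has_real_derivative (real (\<alpha> i) * (x$i + 0) ^ (\<alpha> i - 1) * 1 * R)) (at 0)"
    by (auto intro!: derivative_eq_intros)
  ultimately show ?thesis
    by (simp add: mult.assoc)
qed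

lemma partial_poly_of_coeffs: "partial i (poly_of_coeffs (Suc m) c) = poly_of_coeffs m (cderiv i c)"
proof (rule ext)
  fix x
  have "((\<lambda>t. poly_of_coeffs (Suc m) c (x + t *\<^sub>R axis i 1)) has_real_derivative
        (\<Sum>\<alpha>\<in>multi_indices (Suc m). c \<alpha> * (real (\<alpha> i) * monomial (mi_dec i \<alpha>) x))) (at 0)"
    unfolding poly_of_coeffs_def by (intro DERIV_sum DERIV_cmult has_real_derivative_monomial)
  then have "partial i (poly_of_coeffs (Suc m) c) x
      = (\<Sum>\<alpha>\<in>multi_indices (Suc m). c \<alpha> * (real (\<alpha> i) * monomial (mi_dec i \<alpha>) x))"
    unfolding partial_def by (rule DERIV_imp_deriv)
  also have "\<dots> = poly_of_coeffs m (cderiv i c) x"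
    unfolding poly_of_coeffs_def cderiv_def by (subst sum_multi_indices_Suc[where i=i]) (auto intro!: sum.cong)
  finally show "partial i (poly_of_coeffs (Suc m) c) x = poly_of_coeffs m (cderiv i c) x" .
qed

fun cderiv_list :: "'d list \<Rightarrow> (('d \<Rightarrow> nat) \<Rightarrow> real) \<Rightarrow> ('d \<Rightarrow> nat) \<Rightarrow> real" where
  "cderiv_list [] c = c"
| "cderiv_list (i # is) c = cderiv i (cderiv_list is c)"

lemma partial_list_poly_of_coeffs:
  "partial_list xs (poly_of_coeffs (length xs + k) c) = poly_of_coeffs k (cderiv_list xs c)"
proof (induction xs arbitrary: k)
  case (Cons i xs)
  have "partial_list xs (poly_of_coeffs (length xs + Suc k) c) = poly_of_coeffs (Suc k) (cderiv_list xs c)"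
    by (rule Cons.IH)
  then show ?case
    by (simp add: partial_poly_of_coeffs)
qed simp

lemma cderiv_list_apply:
  "cderiv_list xs c \<gamma> * mi_fact \<gamma>
     = mi_fact (\<lambda>i. \<gamma> i + count_list xs i) * c (\<lambda>i. \<gamma> i + count_list xs i)"
proof (induction xs arbitrary: \<gamma>)
  case (Cons x xs)
  have "(\<lambda>i. mi_inc x \<gamma> i + count_list xs i) = (\<lambda>i. \<gamma> i + count_list (x # xs) i)"
    by (auto simp: fun_eq_iff)
  moreover have "cderiv_list (x # xs) c \<gamma> * mi_fact \<gamma> = cderiv_list xs c (mi_inc x \<gamma>) * mi_fact (mi_inc x \<gamma>)"
    by (simp add: cderiv_def mi_fact_inc del: mi_inc_apply)
  ultimately show ?case
    using Cons.IH[of "mi_inc x \<gamma>"] by simp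
qed simp

lemma ex_count_list_eq: "\<exists>xs. \<forall>i. count_list xs i = (\<alpha>::'d::finite \<Rightarrow> nat) i"
proof (induction "sum \<alpha> UNIV" arbitrary: \<alpha>)
  case 0
  then show ?case by (intro exI[of _ "[]"]) simp
next
  case (Suc n)
  have "\<exists>i. \<alpha> i > 0"
  proof (rule ccontr)
    assume "\<nexists>i. 0 < \<alpha> i"
    then have "sum \<alpha> UNIV = 0" by simp
    with Suc(2) show False by simp
  qed
  then obtain i where i: "\<alpha> i > 0" ..
  have "sum (mi_dec i \<alpha>) UNIV = n"
    using sum_fun_upd_add[of \<alpha> i "\<alpha> i - 1"] Suc(2) i unfolding mi_dec_def by simp
  then obtain xs where "\<forall>j. count_list xs j = mi_dec i \<alpha> j"
    using Suc(1) by blast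
  with i show ?case
    by (intro exI[of _ "i # xs"]) auto
qed

lemma grad_tensor_poly_of_coeffs:
  assumes "\<alpha> \<in> multi_indices m"
  shows "grad_tensor m (poly_of_coeffs m c) \<alpha> = mi_fact \<alpha> * c \<alpha>"
proof -
  define xs where "xs = (SOME xs. \<forall>i. count_list xs i = \<alpha> i)"
  have cnt: "\<forall>i. count_list xs i = \<alpha> i"
    unfolding xs_def using someI_ex[OF ex_count_list_eq[of \<alpha>]] .
  have "length xs = m"
    using sum_count_set[of xs UNIV] cnt assms by (simp add: multi_indices_def)
  then have "grad_tensor m (poly_of_coeffs m c) \<alpha> = partial_list xs (poly_of_coeffs (length xs + 0) c) 0"
    unfolding grad_tensor_def partial_multi_def xs_def[symmetric] by simp
  also have "\<dots> = cderiv_list xs c (\<lambda>_. 0)"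
    using partial_list_poly_of_coeffs[of xs 0 c] by (simp add: poly_of_coeffs_0)
  also have "\<dots> = mi_fact \<alpha> * c \<alpha>"
    using cderiv_list_apply[of xs c "\<lambda>_. 0"] cnt by (simp add: mi_fact_def)
  finally show ?thesis .
qed

lemma tensor_norm_poly_of_coeffs:
  "tensor_norm m (grad_tensor m (poly_of_coeffs m c)) = sqrt (fact m * fischer m c c)"
proof -
  have "(fact m / (\<Prod>i\<in>UNIV. fact (\<alpha> i))) * (grad_tensor m (poly_of_coeffs m c) \<alpha>)\<^sup>2
      = fact m * (mi_fact \<alpha> * c \<alpha> * c \<alpha>)" if "\<alpha> \<in> multi_indices m" for \<alpha>
    using that mi_fact_pos[of \<alpha>]
    by (simp add: grad_tensor_poly_of_coeffs power2_eq_square mi_fact_def[symmetric] field_simps)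
  then show ?thesis
    unfolding tensor_norm_def fischer_def by (simp add: sum_distrib_left cong: sum.cong)
qed

lemma neg_div_A_grad_poly_of_coeffs:
  "neg_div_A_grad A (poly_of_coeffs (Suc (Suc m)) q) x = poly_of_coeffs m (\<lambda>\<alpha>. - qderiv A q \<alpha>) x"
proof -
  have grad: "(\<lambda>y. \<Sum>j\<in>UNIV. A $ i $ j * poly_of_coeffs (Suc m) (cderiv j q) y)
      = poly_of_coeffs (Suc m) (\<lambda>\<alpha>. \<Sum>j\<in>UNIV. A $ i $ j * cderiv j q \<alpha>)" for i
    by (rule ext) (simp add: poly_of_coeffs_sum poly_of_coeffs_cmult)
  have "(\<Sum>a\<in>UNIV. \<Sum>b\<in>UNIV. A$b$a * cderiv a (cderiv b q) \<alpha>)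
      = (\<Sum>a\<in>UNIV. \<Sum>b\<in>UNIV. A$a$b * cderiv a (cderiv b q) \<alpha>)" for \<alpha>
    by (subst sum.swap) (simp add: cderiv_commute)
  moreover have "qderiv A q \<alpha> = (\<Sum>a\<in>UNIV. \<Sum>b\<in>UNIV. A$a$b * cderiv a (cderiv b q) \<alpha>) / 2
      + (\<Sum>a\<in>UNIV. \<Sum>b\<in>UNIV. A$b$a * cderiv a (cderiv b q) \<alpha>) / 2" for \<alpha>
    unfolding qderiv_def sym_part_def sum_divide_distrib sum.distrib[symmetric]
    by (intro sum.cong refl) (simp add: field_simps)
  ultimately have sym: "(\<lambda>\<alpha>. \<Sum>a\<in>UNIV. \<Sum>b\<in>UNIV. A$a$b * cderiv a (cderiv b q) \<alpha>) = qderiv A q"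
    by (simp add: fun_eq_iff)
  have "neg_div_A_grad A (poly_of_coeffs (Suc (Suc m)) q) x
      = - (\<Sum>i\<in>UNIV. poly_of_coeffs m (cderiv i (\<lambda>\<alpha>. \<Sum>j\<in>UNIV. A $ i $ j * cderiv j q \<alpha>)) x)"
    unfolding neg_div_A_grad_def by (simp only: partial_poly_of_coeffs grad)
  also have "\<dots> = poly_of_coeffs m (\<lambda>\<alpha>. - qderiv A q \<alpha>) x"
    unfolding sym[symmetric]
    by (simp add: poly_of_coeffs_uminus poly_of_coeffs_sum poly_of_coeffs_cmult cderiv_sum cderiv_cmult)
  finally show ?thesis .
qed

lemma fact_Suc_Suc_le: "fact (Suc (Suc m)) / 2 \<le> (9::real) ^ m * fact m"
proof -
  have "real ((m + 2) * (m + 1)) \<le> 2 * 9 ^ m"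
  proof (induction m)
    case (Suc m)
    have "real ((Suc m + 2) * (Suc m + 1)) \<le> 9 * real ((m + 2) * (m + 1))" by simp
    also have "\<dots> \<le> 9 * (2 * 9 ^ m)" using Suc by simp
    finally show ?case by simp
  qed simp
  then have "real ((m + 2) * (m + 1)) / 2 * fact m \<le> 9 ^ m * (fact m :: real)"
    by (intro mult_right_mono) simp_all
  moreover have "fact (Suc (Suc m)) / 2 = real ((m + 2) * (m + 1)) / 2 * (fact m :: real)"
    by (simp add: algebra_simps)
  ultimately show ?thesis by simp
qed

lemma tensor_norm_le_of_fischer_le:
  assumes "fischer (Suc (Suc m)) q q \<le> fischer m c c / 2"
  shows "tensor_norm (Suc (Suc m)) (grad_tensor (Suc (Suc m)) (poly_of_coeffs (Suc (Suc m)) q))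
           \<le> 3 ^ m * tensor_norm m (grad_tensor m (poly_of_coeffs m c))"
proof -
  have "fact (Suc (Suc m)) * fischer (Suc (Suc m)) q q \<le> fact (Suc (Suc m)) / 2 * fischer m c c"
    using assms by (simp add: mult_left_mono)
  also have "\<dots> \<le> 9 ^ m * fact m * fischer m c c"
    using fact_Suc_Suc_le[of m] fischer_self_nonneg[of m c] by (intro mult_right_mono)
  also have "\<dots> = (3 ^ m)\<^sup>2 * (fact m * fischer m c c)"
    by (simp add: power_mult_distrib[symmetric] power2_eq_square)
  finally have "sqrt (fact (Suc (Suc m)) * fischer (Suc (Suc m)) q q)
      \<le> sqrt ((3 ^ m)\<^sup>2 * (fact m * fischer m c c))"
    by (rule real_sqrt_le_mono)
  then show ?thesis
    by (simp add: tensor_norm_poly_of_coeffs real_sqrt_mult)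
qed

theorem lemma2p2:
  fixes \<Lambda> :: real
  assumes "\<Lambda> \<ge> 1"
  shows "\<exists>C::real. \<forall>(A::real^'d::finite^'d).
           (\<forall>\<xi>. (norm \<xi>)^2 \<le> \<xi> \<bullet> (A *v \<xi>)) \<longrightarrow>
           (\<forall>\<xi> \<eta>. \<bar>\<eta> \<bullet> (A *v \<xi>)\<bar> \<le> \<Lambda> * norm \<eta> * norm \<xi>) \<longrightarrow>
           (\<forall>m. \<forall>p\<in>hom_polys m. \<exists>q\<in>hom_polys (m + 2).
               (\<forall>x. neg_div_A_grad A q x = p x) \<and>
               tensor_norm (m + 2) (grad_tensor (m + 2) q) \<le> C ^ m * tensor_norm m (grad_tensor m p))"
proof (intro exI[of _ 3] allI impI ballI, unfold add_2_eq_Suc')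
  fix A :: "real^'d^'d" and m :: nat and p :: "real^'d \<Rightarrow> real"
  assume ell: "\<forall>\<xi>. (norm \<xi>)^2 \<le> \<xi> \<bullet> (A *v \<xi>)"
  assume "p \<in> hom_polys m"
  then obtain c where p: "p = poly_of_coeffs m c"
    unfolding hom_polys_eq_range by blast
  have K: "sym_norm2 A \<ge> 1"
    using ell by (rule sym_norm2_ge_1)
  then obtain r where r: "\<forall>\<alpha>\<in>multi_indices m. qderiv A (qmult A r) \<alpha> = - c \<alpha>"
    using qderiv_qmult_solvable[of A] by fastforce
  define q where "q = poly_of_coeffs (Suc (Suc m)) (qmult A r)"
  have "neg_div_A_grad A q x = p x" for x
  proof -
    have "neg_div_A_grad A q x = poly_of_coeffs m (\<lambda>\<alpha>. - qderiv A (qmult A r) \<alpha>) x"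
      unfolding q_def by (rule neg_div_A_grad_poly_of_coeffs)
    also have "\<dots> = p x"
      unfolding p poly_of_coeffs_def using r by simp
    finally show ?thesis .
  qed
  moreover have "tensor_norm (Suc (Suc m)) (grad_tensor (Suc (Suc m)) q) \<le> 3 ^ m * tensor_norm m (grad_tensor m p)"
    unfolding q_def p by (rule tensor_norm_le_of_fischer_le[OF fischer_qmult_solution_le[OF K r]])
  moreover have "q \<in> hom_polys (Suc (Suc m))"
    unfolding q_def hom_polys_eq_range by blast
  ultimately show "\<exists>q\<in>hom_polys (Suc (Suc m)). (\<forall>x. neg_div_A_grad A q x = p x) \<and>
      tensor_norm (Suc (Suc m)) (grad_tensor (Suc (Suc m)) q) \<le> 3 ^ m * tensor_norm m (grad_tensor m p)"
    by blast
qed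

end
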